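(* Let $d\ge 3$. Every unfolded simplicial $d$-manifold that is not a single $d$-simplex has an even scaffold.
   Context: A simplicial $d$-manifold is a finite simplicial complex homeomorphic to a $d$-dimensional manifold, possibly with boundary; its $d$-simplices are called facets and its $(d-1)$-simplices ridges. The dual $1$-skeleton $\mathcal{M}^*$ has a node for each facet and an arc between two facets sharing a ridge. A simplicial manifold is unfolded if its dual $1$-skeleton is a tree. The (vertex-facet) incidence graph has a node for every vertex and every facet, with an arc $(v,f)$ whenever $v$ is a vertex of $f$. An even scaffold is a subgraph of the incidence graph containing every facet node, in which every facet node has degree exactly $2$ and every vertex node has even degree. (The empty complex has the empty even scaffold.) *)

theory Defs
  imports "HOL-Analysis.Analysis"
begin

text \<open>A finite pure simplicial complex of dimension d is given by its set K of facets,
  each a set of d+1 vertices (vertex type 'v). Faces are all subsets of facets.\<close>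

definition pure_complex :: "nat \<Rightarrow> 'v set set \<Rightarrow> bool" where
  "pure_complex d K \<longleftrightarrow> finite K \<and> (\<forall>\<sigma>\<in>K. finite \<sigma> \<and> card \<sigma> = d + 1)"

text \<open>Geometric realization inside the space of functions 'v => real (product topology):
  points are barycentric coordinate functions supported on a facet.\<close>

definition realization :: "'v set set \<Rightarrow> ('v \<Rightarrow> real) set" where
  "realization K = {f. \<exists>\<sigma>\<in>K. (\<forall>v. 0 \<le> f v) \<and> (\<forall>v. v \<notin> \<sigma> \<longrightarrow> f v = 0) \<and> sum f \<sigma> = 1}"

definition half_space :: "(real^'n) set" where
  "half_space = {y. 0 \<le> y $ (SOME k. True)}"

definition is_manifold_with_boundary :: "'n::finite itself \<Rightarrow> 'a::topological_space set \<Rightarrow> bool" where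
  "is_manifold_with_boundary _ X \<longleftrightarrow>
     (\<forall>x\<in>X. \<exists>U (V :: (real^'n) set). x \<in> U \<and> openin (top_of_set X) U \<and>
        openin (top_of_set half_space) V \<and> U homeomorphic V)"

definition simplicial_manifold :: "'n::finite itself \<Rightarrow> 'v set set \<Rightarrow> bool" where
  "simplicial_manifold n K \<longleftrightarrow> pure_complex CARD('n) K \<and>
     is_manifold_with_boundary n (realization K)"

definition dual_adj :: "nat \<Rightarrow> 'v set set \<Rightarrow> 'v set \<Rightarrow> 'v set \<Rightarrow> bool" where
  "dual_adj d K \<sigma> \<tau> \<longleftrightarrow> \<sigma> \<in> K \<and> \<tau> \<in> K \<and> \<sigma> \<noteq> \<tau> \<and> card (\<sigma> \<inter> \<tau>) = d"

definition graph_connected :: "'a set \<Rightarrow> ('a \<Rightarrow> 'a \<Rightarrow> bool) \<Rightarrow> bool" where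
  "graph_connected N E \<longleftrightarrow> (\<forall>x\<in>N. \<forall>y\<in>N. (x, y) \<in> {(a, b). E a b}\<^sup>*)"

definition has_cycle :: "'a set \<Rightarrow> ('a \<Rightarrow> 'a \<Rightarrow> bool) \<Rightarrow> bool" where
  "has_cycle N E \<longleftrightarrow> (\<exists>xs. length xs \<ge> 3 \<and> distinct xs \<and> set xs \<subseteq> N \<and>
       (\<forall>i. Suc i < length xs \<longrightarrow> E (xs ! i) (xs ! Suc i)) \<and> E (last xs) (hd xs))"

definition is_tree :: "'a set \<Rightarrow> ('a \<Rightarrow> 'a \<Rightarrow> bool) \<Rightarrow> bool" where
  "is_tree N E \<longleftrightarrow> N \<noteq> {} \<and> graph_connected N E \<and> \<not> has_cycle N E"

definition unfolded :: "nat \<Rightarrow> 'v set set \<Rightarrow> bool" where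
  "unfolded d K \<longleftrightarrow> is_tree K (dual_adj d K)"

text \<open>Even scaffold: a set S of arcs (v, sigma) of the vertex-facet incidence graph such
  that every facet has degree exactly 2 and every vertex has even degree.\<close>

definition even_scaffold :: "'v set set \<Rightarrow> ('v \<times> 'v set) set \<Rightarrow> bool" where
  "even_scaffold K S \<longleftrightarrow> (\<forall>(v, \<sigma>)\<in>S. \<sigma> \<in> K \<and> v \<in> \<sigma>) \<and>
     (\<forall>\<sigma>\<in>K. card {v. (v, \<sigma>) \<in> S} = 2) \<and>
     (\<forall>v \<in> \<Union>K. even (card {\<sigma>. (v, \<sigma>) \<in> S}))"

end

theory Submission
  imports Defs
begin

text \<open>If the dual graph is connected and has at least two nodes, no facet is isolated, and then
  the facets can be partitioned into stars: a center facet z together with at least one leaf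
  sharing a ridge with z. Such a partition is reached from the trivial one, where every facet is
  a lonely center, by attaching a lonely center z to a neighbour y and, if y was a leaf, regrouping
  the star of y; each such step removes z from the lonely centers without creating new ones.
  It then suffices to give every star an even scaffold. A leaf misses only one vertex of z, so for
  d \<ge> 3 two leaves share at least two vertices, and both may receive the same two of them. Pairing
  off leaves in this way leaves either one leaf, which is paired with z in the same way, or two
  leaves l1, l2, which form a triangle with z: with a in all three, b in z \<inter> l1 and c in z \<inter> l2,
  give l1 the vertices a, b, give z the vertices b, c and give l2 the vertices c, a.\<close>

text \<open>A center map sends every node to the center of its star. Its fibers are stars whose leaves
  are adjacent to the center, except that a lonely center forms a singleton fiber.\<close>

definition center_map :: "'a set \<Rightarrow> ('a \<Rightarrow> 'a \<Rightarrow> bool) \<Rightarrow> ('a \<Rightarrow> 'a) \<Rightarrow> bool" where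
  "center_map N E c \<longleftrightarrow> (\<forall>x\<in>N. c x \<in> N \<and> c (c x) = c x \<and> (c x \<noteq> x \<longrightarrow> E x (c x)))"

definition lonely_centers :: "'a set \<Rightarrow> ('a \<Rightarrow> 'a) \<Rightarrow> 'a set" where
  "lonely_centers N c = {z\<in>N. \<forall>x\<in>N. c x = z \<longleftrightarrow> x = z}"

lemma center_mapD:
  assumes "center_map N E c" "x \<in> N"
  shows "c x \<in> N" "c (c x) = c x" "c x \<noteq> x \<Longrightarrow> E x (c x)"
  using assms unfolding center_map_def by auto

lemma lonely_centersD:
  assumes "z \<in> lonely_centers N c"
  shows "z \<in> N" "c z = z" "x \<in> N \<Longrightarrow> c x = z \<longleftrightarrow> x = z"
  using assms unfolding lonely_centers_def by auto

lemma not_lonely_centerI: "x \<in> N \<Longrightarrow> c x = u \<longleftrightarrow> x \<noteq> u \<Longrightarrow> u \<notin> lonely_centers N c"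
  unfolding lonely_centers_def by blast

lemma lonely_centers_fun_upd:
  assumes "\<And>x. x \<in> N - M \<Longrightarrow> c' x = c x" and "\<And>u. u \<in> M \<union> c ` M \<Longrightarrow> u \<notin> lonely_centers N c'"
  shows "lonely_centers N c' \<subseteq> lonely_centers N c - M"
proof
  fix u assume u: "u \<in> lonely_centers N c'"
  then have "u \<notin> M" "u \<notin> c ` M" using assms(2) by blast+
  moreover have "c x = u \<longleftrightarrow> x = u" if x: "x \<in> N" for x
  proof (cases "x \<in> M")
    case True
    then show ?thesis using \<open>u \<notin> M\<close> \<open>u \<notin> c ` M\<close> by blast
  next
    case False
    then have "c x = c' x" using assms(1) x by simp
    then show ?thesis using u x unfolding lonely_centers_def by simp
  qed
  ultimately show "u \<in> lonely_centers N c - M" using u unfolding lonely_centers_def by blast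
qed

lemma center_map_attach_to_center:
  assumes c: "center_map N E c" and z: "z \<in> lonely_centers N c"
    and y: "y \<in> N" "y \<noteq> z" "E z y" "c y = y"
  shows "center_map N E (c(z := y))" and "lonely_centers N (c(z := y)) \<subseteq> lonely_centers N c - {z}"
proof -
  show "center_map N E (c(z := y))"
    unfolding center_map_def using y center_mapD[OF c] lonely_centersD[OF z] by auto
  show "lonely_centers N (c(z := y)) \<subseteq> lonely_centers N c - {z}"
  proof (rule lonely_centers_fun_upd)
    fix u assume "u \<in> {z} \<union> c ` {z}"
    then show "u \<notin> lonely_centers N (c(z := y))"
      using lonely_centersD[OF z] y by (intro not_lonely_centerI[of z]) auto
  qed auto
qed

lemma center_map_detach_leaf:
  assumes c: "center_map N E c" and z: "z \<in> lonely_centers N c"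
    and y: "y \<in> N" "y \<noteq> z" "E z y" "c y = w" "w \<noteq> y"
    and x: "x \<in> N" "x \<noteq> y" "x \<noteq> w" "c x = w"
  shows "center_map N E (c(z := y, y := y))"
    and "lonely_centers N (c(z := y, y := y)) \<subseteq> lonely_centers N c - {z}"
proof -
  have "w \<noteq> z" using lonely_centersD(3)[OF z] y by auto
  have not_y: "c x' \<noteq> y" if "x' \<in> N" for x' using center_mapD(2)[OF c that] y by metis
  show "center_map N E (c(z := y, y := y))"
    unfolding center_map_def using y \<open>w \<noteq> z\<close> not_y center_mapD[OF c] lonely_centersD[OF z] by auto
  have "lonely_centers N (c(z := y, y := y)) \<subseteq> lonely_centers N c - {z, y}"
  proof (rule lonely_centers_fun_upd)
    fix u assume "u \<in> {z, y} \<union> c ` {z, y}"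
    then consider "u = z" | "u = y" | "u = w" using lonely_centersD(2)[OF z] y by auto
    then show "u \<notin> lonely_centers N (c(z := y, y := y))"
    proof cases
      case 1 then show ?thesis using lonely_centersD[OF z] y by (intro not_lonely_centerI[of z]) auto
    next
      case 2 then show ?thesis using lonely_centersD[OF z] y by (intro not_lonely_centerI[of z]) auto
    next
      case 3 then show ?thesis
        using x \<open>w \<noteq> z\<close> lonely_centersD[OF z] by (intro not_lonely_centerI[of x]) auto
    qed
  qed auto
  then show "lonely_centers N (c(z := y, y := y)) \<subseteq> lonely_centers N c - {z}" by blast
qed

lemma center_map_recenter_edge:
  assumes c: "center_map N E c" and z: "z \<in> lonely_centers N c"
    and y: "y \<in> N" "y \<noteq> z" "E z y" "c y = w" "w \<noteq> y" "E w y"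
    and only_leaf: "\<And>x. x \<in> N \<Longrightarrow> c x = w \<Longrightarrow> x = y \<or> x = w"
  shows "center_map N E (c(z := y, y := y, w := y))"
    and "lonely_centers N (c(z := y, y := y, w := y)) \<subseteq> lonely_centers N c - {z}"
proof -
  have "w \<in> N" "c w = w" "w \<noteq> z"
    using center_mapD[OF c y(1)] lonely_centersD(3)[OF z y(1)] y by auto
  have not_y: "c x \<noteq> y" if "x \<in> N" for x using center_mapD(2)[OF c that] y by metis
  have not_w: "c x \<noteq> w" if "x \<in> N" "x \<noteq> y" "x \<noteq> w" for x using that only_leaf by blast
  show "center_map N E (c(z := y, y := y, w := y))"
    unfolding center_map_def
    using y \<open>w \<noteq> z\<close> not_y not_w center_mapD[OF c] lonely_centersD[OF z] by auto
  have "lonely_centers N (c(z := y, y := y, w := y)) \<subseteq> lonely_centers N c - {z, y, w}"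
  proof (rule lonely_centers_fun_upd)
    fix u assume "u \<in> {z, y, w} \<union> c ` {z, y, w}"
    then consider "u = z" | "u = y" | "u = w" using lonely_centersD(2)[OF z] \<open>c w = w\<close> y by auto
    then show "u \<notin> lonely_centers N (c(z := y, y := y, w := y))"
    proof cases
      case 1 then show ?thesis
        using lonely_centersD[OF z] y \<open>w \<noteq> z\<close> by (intro not_lonely_centerI[of z]) auto
    next
      case 2 then show ?thesis
        using lonely_centersD[OF z] y \<open>w \<noteq> z\<close> by (intro not_lonely_centerI[of z]) auto
    next
      case 3 then show ?thesis using \<open>w \<in> N\<close> y by (intro not_lonely_centerI[of w]) auto
    qed
  qed auto
  then show "lonely_centers N (c(z := y, y := y, w := y)) \<subseteq> lonely_centers N c - {z}" by blast
qed

lemma center_map_reduce_lonely_centers: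
  assumes c: "center_map N E c" and z: "z \<in> lonely_centers N c"
    and y: "y \<in> N" "y \<noteq> z" "E z y" and sym: "\<And>a b. E a b \<Longrightarrow> E b a"
  shows "\<exists>c'. center_map N E c' \<and> lonely_centers N c' \<subset> lonely_centers N c"
proof -
  have "\<exists>c'. center_map N E c' \<and> lonely_centers N c' \<subseteq> lonely_centers N c - {z}"
  proof (cases "c y = y")
    case True
    then show ?thesis using center_map_attach_to_center[OF c z y] by blast
  next
    case leaf: False
    show ?thesis
    proof (cases "\<exists>x\<in>N. x \<noteq> y \<and> x \<noteq> c y \<and> c x = c y")
      case True
      then obtain x where "x \<in> N" "x \<noteq> y" "x \<noteq> c y" "c x = c y" by blast
      then show ?thesis using center_map_detach_leaf[OF c z y refl leaf] by blast
    next
      case no_other_leaf: False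
      have "E (c y) y" using center_mapD(3)[OF c y(1) leaf] by (rule sym)
      then show ?thesis
        using center_map_recenter_edge[OF c z y refl leaf] no_other_leaf by blast
    qed
  qed
  then show ?thesis using z by blast
qed

lemma ex_center_map_without_lonely_centers:
  assumes "finite N" and nbr: "\<And>x. x \<in> N \<Longrightarrow> \<exists>y\<in>N. y \<noteq> x \<and> E x y"
    and sym: "\<And>a b. E a b \<Longrightarrow> E b a"
  shows "\<exists>c. center_map N E c \<and> lonely_centers N c = {}"
proof -
  have "\<exists>c'. center_map N E c' \<and> lonely_centers N c' = {}" if "center_map N E c" for c
    using that
  proof (induction "card (lonely_centers N c)" arbitrary: c rule: less_induct)
    case less
    show ?case
    proof (cases "lonely_centers N c = {}")
      case False
      then obtain z where z: "z \<in> lonely_centers N c" by blast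
      then obtain y where "y \<in> N" "y \<noteq> z" "E z y"
        using nbr unfolding lonely_centers_def by blast
      then obtain c' where c': "center_map N E c'" "lonely_centers N c' \<subset> lonely_centers N c"
        using center_map_reduce_lonely_centers[OF less.prems z] sym by blast
      have "card (lonely_centers N c') < card (lonely_centers N c)"
        using c'(2) \<open>finite N\<close> by (intro psubset_card_mono) (auto simp: lonely_centers_def)
      then show ?thesis using less.hyps c'(1) by blast
    qed (use less.prems in blast)
  qed
  moreover have "center_map N E id" unfolding center_map_def by simp
  ultimately show ?thesis by blast
qed

lemma dual_adj_sym: "dual_adj d K \<sigma> \<tau> \<Longrightarrow> dual_adj d K \<tau> \<sigma>"
  unfolding dual_adj_def by (auto simp: Int_commute)

lemma graph_connected_has_neighbour:
  assumes "graph_connected N E" "x \<in> N" "y \<in> N" "x \<noteq> y"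
  obtains x' where "E x x'"
proof -
  have "(x, y) \<in> {(a, b). E a b}\<^sup>*" using assms unfolding graph_connected_def by blast
  then show ?thesis using \<open>x \<noteq> y\<close> that by (cases rule: converse_rtranclE) auto
qed

lemma even_scaffoldI:
  assumes "\<And>v \<sigma>. (v, \<sigma>) \<in> S \<Longrightarrow> \<sigma> \<in> K \<and> v \<in> \<sigma>"
    and "\<And>\<sigma>. \<sigma> \<in> K \<Longrightarrow> card {v. (v, \<sigma>) \<in> S} = 2"
    and "\<And>v. even (card {\<sigma>. (v, \<sigma>) \<in> S})"
  shows "even_scaffold K S"
  unfolding even_scaffold_def using assms by auto

lemma even_scaffold_arcD:
  "even_scaffold K S \<Longrightarrow> (v, \<sigma>) \<in> S \<Longrightarrow> \<sigma> \<in> K \<and> v \<in> \<sigma>"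
  unfolding even_scaffold_def by auto

lemma even_scaffold_facet_degree:
  "even_scaffold K S \<Longrightarrow> \<sigma> \<in> K \<Longrightarrow> card {v. (v, \<sigma>) \<in> S} = 2"
  unfolding even_scaffold_def by auto

lemma even_scaffold_vertex_degree:
  assumes "even_scaffold K S"
  shows "even (card {\<sigma>. (v, \<sigma>) \<in> S})"
proof (cases "v \<in> \<Union>K")
  case True
  then show ?thesis using assms unfolding even_scaffold_def by auto
next
  case False
  then have "{\<sigma>. (v, \<sigma>) \<in> S} = {}" using even_scaffold_arcD[OF assms] by blast
  then show ?thesis by simp
qed

lemma even_scaffold_Un:
  assumes S: "even_scaffold A S" and T: "even_scaffold B T"
    and AB: "A \<inter> B = {}" "finite A" "finite B"
  shows "even_scaffold (A \<union> B) (S \<union> T)"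
proof (rule even_scaffoldI)
  note arcs_S = even_scaffold_arcD[OF S] and arcs_T = even_scaffold_arcD[OF T]
  show "\<sigma> \<in> A \<union> B \<and> v \<in> \<sigma>" if "(v, \<sigma>) \<in> S \<union> T" for v \<sigma>
    using that arcs_S arcs_T by blast
  show "card {v. (v, \<sigma>) \<in> S \<union> T} = 2" if "\<sigma> \<in> A \<union> B" for \<sigma>
  proof (cases "\<sigma> \<in> A")
    case True
    then have "{v. (v, \<sigma>) \<in> S \<union> T} = {v. (v, \<sigma>) \<in> S}" using arcs_T AB(1) by blast
    then show ?thesis using even_scaffold_facet_degree[OF S True] by simp
  next
    case False
    then have "\<sigma> \<in> B" using that by blast
    moreover from False have "{v. (v, \<sigma>) \<in> S \<union> T} = {v. (v, \<sigma>) \<in> T}" using arcs_S by blast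
    ultimately show ?thesis using even_scaffold_facet_degree[OF T] by simp
  qed
  show "even (card {\<sigma>. (v, \<sigma>) \<in> S \<union> T})" for v
  proof -
    have "{\<sigma>. (v, \<sigma>) \<in> S} \<subseteq> A" "{\<sigma>. (v, \<sigma>) \<in> T} \<subseteq> B" using arcs_S arcs_T by blast+
    then have "card ({\<sigma>. (v, \<sigma>) \<in> S} \<union> {\<sigma>. (v, \<sigma>) \<in> T}) =
        card {\<sigma>. (v, \<sigma>) \<in> S} + card {\<sigma>. (v, \<sigma>) \<in> T}"
      using AB by (intro card_Un_disjoint) (blast intro: finite_subset)+
    moreover have "{\<sigma>. (v, \<sigma>) \<in> S \<union> T} = {\<sigma>. (v, \<sigma>) \<in> S} \<union> {\<sigma>. (v, \<sigma>) \<in> T}" by blast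
    ultimately show ?thesis
      using even_scaffold_vertex_degree[OF S] even_scaffold_vertex_degree[OF T] by simp
  qed
qed

lemma even_scaffold_UN:
  assumes "finite I" and "\<And>i. i \<in> I \<Longrightarrow> finite (K i)" and "disjoint_family_on K I"
    and "\<And>i. i \<in> I \<Longrightarrow> \<exists>S. even_scaffold (K i) S"
  shows "\<exists>S. even_scaffold (\<Union>i\<in>I. K i) S"
  using assms
proof (induction I rule: finite_induct)
  case empty
  have "even_scaffold {} {}" by (rule even_scaffoldI) auto
  then show ?case by auto
next
  case (insert i I)
  have disjoint: "K i \<inter> (\<Union>j\<in>I. K j) = {}" and disj: "disjoint_family_on K I"
    using insert.prems(2) by (simp_all add: disjoint_family_on_insert insert.hyps(2))
  have finite: "finite (K i)" "finite (\<Union>j\<in>I. K j)"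
    using insert.hyps(1) insert.prems(1) by simp_all
  obtain S where S: "even_scaffold (K i) S" using insert.prems(3) by blast
  have "\<exists>T. even_scaffold (\<Union>j\<in>I. K j) T"
    using insert.prems(1,3) by (intro insert.IH disj) blast+
  then obtain T where "even_scaffold (\<Union>j\<in>I. K j) T" ..
  then have "even_scaffold (K i \<union> (\<Union>j\<in>I. K j)) (S \<union> T)"
    using even_scaffold_Un[OF S _ disjoint finite] by blast
  then show ?case unfolding UN_insert by blast
qed

lemma even_scaffold_pair:
  assumes "\<sigma> \<noteq> \<tau>" "p \<subseteq> \<sigma> \<inter> \<tau>" "card p = 2"
  shows "even_scaffold {\<sigma>, \<tau>} (p \<times> {\<sigma>, \<tau>})"
proof (rule even_scaffoldI)
  show "\<rho> \<in> {\<sigma>, \<tau>} \<and> v \<in> \<rho>" if "(v, \<rho>) \<in> p \<times> {\<sigma>, \<tau>}" for v \<rho>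
    using that assms(2) by blast
  show "card {v. (v, \<rho>) \<in> p \<times> {\<sigma>, \<tau>}} = 2" if "\<rho> \<in> {\<sigma>, \<tau>}" for \<rho>
  proof -
    have "{v. (v, \<rho>) \<in> p \<times> {\<sigma>, \<tau>}} = p" using that by blast
    then show ?thesis using assms(3) by simp
  qed
  show "even (card {\<rho>. (v, \<rho>) \<in> p \<times> {\<sigma>, \<tau>}})" for v
  proof -
    have "{\<rho>. (v, \<rho>) \<in> p \<times> {\<sigma>, \<tau>}} = (if v \<in> p then {\<sigma>, \<tau>} else {})" by auto
    then show ?thesis using assms(1) by simp
  qed
qed

lemma even_scaffold_triangle:
  assumes "distinct [\<sigma>, \<tau>, \<rho>]" "distinct [a, b, c]"
    and "a \<in> \<sigma>" "b \<in> \<sigma>" "b \<in> \<tau>" "c \<in> \<tau>" "c \<in> \<rho>" "a \<in> \<rho>"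
  shows "even_scaffold {\<sigma>, \<tau>, \<rho>} {(a, \<sigma>), (b, \<sigma>), (b, \<tau>), (c, \<tau>), (c, \<rho>), (a, \<rho>)}"
    (is "even_scaffold ?K ?S")
proof (rule even_scaffoldI)
  show "x \<in> ?K \<and> v \<in> x" if "(v, x) \<in> ?S" for v x
    using that assms(3-8) by blast
  show "card {v. (v, x) \<in> ?S} = 2" if x: "x \<in> ?K" for x
  proof -
    have "{v. (v, x) \<in> ?S} = (if x = \<sigma> then {a, b} else if x = \<tau> then {b, c} else {a, c})"
      using x assms(1) by auto
    then show ?thesis using assms(2) by simp
  qed
  show "even (card {x. (v, x) \<in> ?S})" for v
  proof -
    have "{x. (v, x) \<in> ?S} =
        (if v = a then {\<sigma>, \<rho>} else if v = b then {\<sigma>, \<tau>} else if v = c then {\<tau>, \<rho>} else {})"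
      using assms(2) by auto
    then show ?thesis using assms(1) by simp
  qed
qed

lemma card_Int_lower_bound:
  assumes "finite C" "A \<subseteq> C" "B \<subseteq> C"
  shows "card A + card B \<le> card C + card (A \<inter> B)"
proof -
  have "card A + card B = card (A \<union> B) + card (A \<inter> B)"
    using assms by (intro card_Un_Int) (auto intro: finite_subset)
  moreover have "card (A \<union> B) \<le> card C" using assms by (intro card_mono) auto
  ultimately show ?thesis by simp
qed

lemma leaves_share_two_vertices:
  assumes "finite z" "card z = d + 1" "3 \<le> d" "card (z \<inter> l1) = d" "card (z \<inter> l2) = d"
  shows "2 \<le> card (z \<inter> l1 \<inter> l2)"
  using card_Int_lower_bound[of z "z \<inter> l1" "z \<inter> l2"] assms by (simp add: Int_ac)

lemma even_scaffold_two_leaves: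
  assumes "distinct [l1, z, l2]" "finite z" "card z = d + 1" "3 \<le> d"
    and l1: "card (z \<inter> l1) = d" and l2: "card (z \<inter> l2) = d"
  shows "\<exists>S. even_scaffold {l1, z, l2} S"
proof -
  have "z \<inter> l1 \<inter> l2 \<noteq> {}"
    using leaves_share_two_vertices[OF assms(2-4) l1 l2] by (intro notI) simp
  then obtain a where a: "a \<in> z \<inter> l1 \<inter> l2" by blast
  have "0 < card (z \<inter> l1 - {a})"
    using diff_card_le_card_Diff[of "{a}" "z \<inter> l1"] l1 assms(2-4) by simp
  then obtain b where b: "b \<in> z \<inter> l1" "b \<noteq> a" unfolding card_gt_0_iff by blast
  have "0 < card (z \<inter> l2 - {a, b})"
    using diff_card_le_card_Diff[of "{a, b}" "z \<inter> l2"] l2 assms(2-4) b(2) by simp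
  then obtain c where c: "c \<in> z \<inter> l2" "c \<noteq> a" "c \<noteq> b" unfolding card_gt_0_iff by blast
  have "even_scaffold {l1, z, l2} {(a, l1), (b, l1), (b, z), (c, z), (c, l2), (a, l2)}"
    using assms(1) a b c by (intro even_scaffold_triangle) auto
  then show ?thesis ..
qed

lemma even_scaffold_star:
  assumes "finite L" "L \<noteq> {}" "z \<notin> L" "3 \<le> d" "finite z" "card z = d + 1"
    and "\<And>l. l \<in> L \<Longrightarrow> card (z \<inter> l) = d"
  shows "\<exists>S. even_scaffold (insert z L) S"
  using assms
proof (induction "card L" arbitrary: L rule: less_induct)
  case less
  note d = \<open>3 \<le> d\<close> \<open>finite z\<close> \<open>card z = d + 1\<close>
  note leaf = less.prems(7)
  obtain l1 where l1: "l1 \<in> L" using \<open>L \<noteq> {}\<close> by blast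
  have "z \<noteq> l1" using l1 less.prems(3) by blast
  show ?case
  proof (cases "L = {l1}")
    case True
    have "2 \<le> card (z \<inter> l1)" using leaf[OF l1] d by simp
    then obtain p where "p \<subseteq> z \<inter> l1" "card p = 2" by (rule obtain_subset_with_card_n)
    then have "even_scaffold {z, l1} (p \<times> {z, l1})"
      using \<open>z \<noteq> l1\<close> by (intro even_scaffold_pair)
    then show ?thesis using True by blast
  next
    case False
    then obtain l2 where l2: "l2 \<in> L" "l2 \<noteq> l1" using l1 by blast
    have "z \<noteq> l2" using l2 less.prems(3) by blast
    show ?thesis
    proof (cases "L = {l1, l2}")
      case True
      have "\<exists>S. even_scaffold {l1, z, l2} S"
        using \<open>z \<noteq> l1\<close> \<open>z \<noteq> l2\<close> l2(2) d leaf[OF l1] leaf[OF l2(1)]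
        by (intro even_scaffold_two_leaves) auto
      moreover have "{l1, z, l2} = insert z L" using True by blast
      ultimately show ?thesis by metis
    next
      case False
      define L' where "L' = L - {l1, l2}"
      have "card L' < card L"
        unfolding L'_def using l1 less.prems(1) by (intro psubset_card_mono) auto
      moreover have "finite L'" "L' \<noteq> {}" "z \<notin> L'"
        using less.prems(1,3) l1 l2 False unfolding L'_def by auto
      ultimately have "\<exists>S. even_scaffold (insert z L') S"
        using d leaf unfolding L'_def by (intro less.hyps) auto
      then obtain S where S: "even_scaffold (insert z L') S" ..
      have "2 \<le> card (z \<inter> l1 \<inter> l2)"
        using leaves_share_two_vertices d leaf[OF l1] leaf[OF l2(1)] by blast
      then obtain p where "p \<subseteq> z \<inter> l1 \<inter> l2" "card p = 2" by (rule obtain_subset_with_card_n)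
      then have "even_scaffold {l1, l2} (p \<times> {l1, l2})"
        using l2 by (intro even_scaffold_pair) auto
      moreover have "insert z L' \<inter> {l1, l2} = {}"
        using less.prems(3) l1 l2 unfolding L'_def by blast
      ultimately have "even_scaffold (insert z L' \<union> {l1, l2}) (S \<union> p \<times> {l1, l2})"
        using S \<open>finite L'\<close> by (intro even_scaffold_Un) auto
      moreover have "insert z L' \<union> {l1, l2} = insert z L"
        using l1 l2 unfolding L'_def by blast
      ultimately show ?thesis by metis
    qed
  qed
qed

lemma even_scaffold_from_center_map:
  assumes "pure_complex d K" "3 \<le> d"
    and c: "center_map K (dual_adj d K) c" "lonely_centers K c = {}"
  shows "\<exists>S. even_scaffold K S"
proof -
  define star where "star z = {x \<in> K. c x = z}" for z
  have "finite K" using assms(1) unfolding pure_complex_def by blast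
  have "\<exists>S. even_scaffold (star z) S" if "z \<in> c ` K" for z
  proof -
    have z: "z \<in> K" "c z = z" using that c(1) unfolding center_map_def by auto
    then have "z \<notin> lonely_centers K c" using c(2) by blast
    then have leaves: "star z - {z} \<noteq> {}" using z unfolding lonely_centers_def star_def by auto
    have "card (z \<inter> l) = d" if "l \<in> star z - {z}" for l
      using that c(1) unfolding star_def center_map_def dual_adj_def by (auto simp: Int_commute)
    moreover have "finite z" "card z = d + 1"
      using assms(1) z(1) unfolding pure_complex_def by auto
    moreover have "finite (star z)" using \<open>finite K\<close> unfolding star_def by simp
    ultimately have "\<exists>S. even_scaffold (insert z (star z - {z})) S"
      using leaves \<open>3 \<le> d\<close> by (intro even_scaffold_star) auto
    moreover have "insert z (star z - {z}) = star z" using z unfolding star_def by blast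
    ultimately show ?thesis by simp
  qed
  moreover have "disjoint_family_on star (c ` K)"
    unfolding disjoint_family_on_def star_def by blast
  moreover have "finite (star z)" for z using \<open>finite K\<close> unfolding star_def by simp
  ultimately have "\<exists>S. even_scaffold (\<Union>z\<in>c ` K. star z) S"
    using \<open>finite K\<close> by (intro even_scaffold_UN) auto
  moreover have "(\<Union>z\<in>c ` K. star z) = K"
    using c(1) unfolding star_def center_map_def by auto
  ultimately show ?thesis by simp
qed

theorem lemma6:
  fixes K :: "'v set set"
  assumes "CARD('n::finite) \<ge> 3"
    and "simplicial_manifold TYPE('n) K"
    and "unfolded CARD('n) K"
    and "card K \<noteq> 1"
  shows "\<exists>S. even_scaffold K S"
proof -
  let ?d = "CARD('n)"
  have pure: "pure_complex ?d K" using assms(2) unfolding simplicial_manifold_def by blast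
  then have "finite K" unfolding pure_complex_def by blast
  have "K \<noteq> {}" and conn: "graph_connected K (dual_adj ?d K)"
    using assms(3) unfolding unfolded_def is_tree_def by auto
  have "\<exists>y\<in>K. y \<noteq> x \<and> dual_adj ?d K x y" if x: "x \<in> K" for x
  proof -
    have "K \<noteq> {x}" using assms(4) by auto
    then obtain y where "y \<in> K" "y \<noteq> x" using x by blast
    then obtain x' where "dual_adj ?d K x x'" using graph_connected_has_neighbour[OF conn x] by metis
    then show ?thesis unfolding dual_adj_def by blast
  qed
  then obtain c where "center_map K (dual_adj ?d K) c" "lonely_centers K c = {}"
    using ex_center_map_without_lonely_centers[OF \<open>finite K\<close>] dual_adj_sym by metis
  then show ?thesis using even_scaffold_from_center_map pure assms(1) by blast
qed

end
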